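(* Let $\Delta=\Delta_1+\cdots+\Delta_r\subseteq M_{\mathbb R}$ be a proper centered nef-partition of a reflexive polytope $\Delta$. Call a nonempty subset $I\subseteq\{1,\dots,r\}$ irreducible if $\Delta^I:=\sum_{i\in I}\Delta_i$ contains $0$ in its relative interior and $I$ is minimal (with respect to inclusion) with this property. Then any two distinct irreducible subsets of $\{1,\dots,r\}$ are disjoint.
   Context: $M\cong\mathbb Z^d$, $N$ dual lattice. A reflexive polytope $\Delta\subseteq M_{\mathbb R}$ is a lattice polytope with $0$ in its interior whose polar $\{y:\langle x,y\rangle\ge-1\ \forall x\in\Delta\}$ is a lattice polytope. A centered nef-partition of $\Delta$ is a decomposition $\Delta=\Delta_1+\cdots+\Delta_r$ into lattice polytopes with $0\in\Delta_i$ for all $i$; it is proper if $\dim\Delta_i>0$ for all $i$. *)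

theory Defs
  imports "HOL-Analysis.Analysis"
begin

text \<open>The lattice M = Z^d inside M_R = R^d, modelled as real^'n; the dual lattice N is
  identified with Z^d via the standard inner product.\<close>

definition lattice_point :: "real^'n \<Rightarrow> bool" where
  "lattice_point x \<longleftrightarrow> (\<forall>i. x $ i \<in> \<int>)"

definition lattice_polytope :: "(real^'n) set \<Rightarrow> bool" where
  "lattice_polytope P \<longleftrightarrow>
     (\<exists>S. finite S \<and> S \<noteq> {} \<and> (\<forall>x\<in>S. lattice_point x) \<and> P = convex hull S)"

definition polar :: "(real^'n) set \<Rightarrow> (real^'n) set" where
  "polar P = {y. \<forall>x\<in>P. x \<bullet> y \<ge> -1}"

definition reflexive_polytope :: "(real^'n) set \<Rightarrow> bool" where
  "reflexive_polytope P \<longleftrightarrow>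
     lattice_polytope P \<and> 0 \<in> interior P \<and> lattice_polytope (polar P)"

definition minkowski_sum :: "(nat \<Rightarrow> (real^'n) set) \<Rightarrow> nat set \<Rightarrow> (real^'n) set" where
  "minkowski_sum D I = {x. \<exists>f. (\<forall>i\<in>I. f i \<in> D i) \<and> x = (\<Sum>i\<in>I. f i)}"

definition centered_nef_partition ::
  "(real^'n) set \<Rightarrow> nat \<Rightarrow> (nat \<Rightarrow> (real^'n) set) \<Rightarrow> bool" where
  "centered_nef_partition P r D \<longleftrightarrow>
     P = minkowski_sum D {1..r} \<and>
     (\<forall>i\<in>{1..r}. lattice_polytope (D i) \<and> 0 \<in> D i)"

definition proper_nef_partition ::
  "(real^'n) set \<Rightarrow> nat \<Rightarrow> (nat \<Rightarrow> (real^'n) set) \<Rightarrow> bool" where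
  "proper_nef_partition P r D \<longleftrightarrow>
     centered_nef_partition P r D \<and> (\<forall>i\<in>{1..r}. aff_dim (D i) > 0)"

definition zero_in_relint :: "nat \<Rightarrow> (nat \<Rightarrow> (real^'n) set) \<Rightarrow> nat set \<Rightarrow> bool" where
  "zero_in_relint r D I \<longleftrightarrow>
     I \<noteq> {} \<and> I \<subseteq> {1..r} \<and> 0 \<in> rel_interior (minkowski_sum D I)"

definition irreducible_subset :: "nat \<Rightarrow> (nat \<Rightarrow> (real^'n) set) \<Rightarrow> nat set \<Rightarrow> bool" where
  "irreducible_subset r D I \<longleftrightarrow>
     zero_in_relint r D I \<and> (\<forall>J. J \<subset> I \<longrightarrow> \<not> zero_in_relint r D J)"

end

theory Submission
  imports Defs
begin

text \<open>Let \<open>K = I \<inter> J\<close>; it suffices to show that \<open>0\<close> lies in the relative interior of \<open>\<Delta>\<^sup>K\<close>,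
  for then minimality forces \<open>I = K = J\<close>. Otherwise some functional \<open>a\<close> supports \<open>\<Delta>\<^sup>K\<close> at \<open>0\<close>
  without vanishing on it. Minimising \<open>a\<close> over \<open>\<Delta>\<close> writes \<open>a\<close> as a positive combination of
  lattice points \<open>w\<close> of the polar, i.e. of lattice functionals with \<open>w \<ge> -1\<close> on \<open>\<Delta>\<close>, which equal
  \<open>-1\<close> on the face where \<open>a\<close> is minimal. By integrality each such \<open>w\<close> is negative on at most
  one summand \<open>\<Delta>\<^sub>i\<close>, and the face condition excludes \<open>i \<in> K\<close>. So \<open>w \<ge> 0\<close> on all of \<open>\<Delta>\<^sup>I\<close> or on
  all of \<open>\<Delta>\<^sup>J\<close>; as \<open>0\<close> is a relative interior point there, \<open>w\<close> vanishes on \<open>\<Delta>\<^sup>K\<close>, and hence so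
  does \<open>a\<close>.\<close>

lemma convex_lattice_polytope: "lattice_polytope P \<Longrightarrow> convex P"
  unfolding lattice_polytope_def by (metis convex_convex_hull)

lemma compact_lattice_polytope: "lattice_polytope P \<Longrightarrow> compact P"
  unfolding lattice_polytope_def by (metis compact_convex_hull finite_imp_compact)

lemma lattice_point_inner_Ints: "lattice_point x \<Longrightarrow> lattice_point y \<Longrightarrow> x \<bullet> y \<in> \<int>"
  unfolding lattice_point_def inner_vec_def by (auto intro!: Ints_sum Ints_mult)

lemma lattice_polytope_negative_value_le_minus_one:
  assumes "lattice_polytope Q" "lattice_point w" "x \<in> Q" "x \<bullet> w < 0"
  obtains s where "s \<in> Q" "s \<bullet> w \<le> -1"
proof -
  obtain S where S: "\<forall>s\<in>S. lattice_point s" "Q = convex hull S"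
    using assms(1) unfolding lattice_polytope_def by auto
  have "\<not> S \<subseteq> {y. 0 \<le> w \<bullet> y}"
  proof
    assume "S \<subseteq> {y. 0 \<le> w \<bullet> y}"
    then have "Q \<subseteq> {y. 0 \<le> w \<bullet> y}"
      unfolding S(2) using convex_halfspace_ge by (rule hull_minimal)
    then show False using assms(3,4) by (auto simp: inner_commute)
  qed
  then obtain s where s: "s \<in> S" "s \<bullet> w < 0"
    by (metis inner_commute mem_Collect_eq not_le subsetI)
  have "s \<bullet> w \<in> \<int>" using S(1) s(1) assms(2) by (simp add: lattice_point_inner_Ints)
  then have "s \<bullet> w \<le> -1" using s(2) by (auto elim!: Ints_cases)
  moreover have "s \<in> Q" unfolding S(2) using s(1) by (rule hull_inc)
  ultimately show thesis using that by blast
qed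

lemma supporting_hyperplane_rel_interior_eq:
  fixes S :: "'a::euclidean_space set"
  assumes "convex S" "z \<in> rel_interior S" "\<And>y. y \<in> S \<Longrightarrow> w \<bullet> z \<le> w \<bullet> y" "x \<in> S"
  shows "w \<bullet> x = w \<bullet> z"
proof -
  have "S \<inter> {y. w \<bullet> y = w \<bullet> z} face_of S"
    using assms(1,3) by (rule face_of_Int_supporting_hyperplane_ge)
  moreover have "z \<in> (S \<inter> {y. w \<bullet> y = w \<bullet> z}) \<inter> rel_interior S"
    using assms(2) rel_interior_subset by auto
  ultimately have "S \<inter> {y. w \<bullet> y = w \<bullet> z} = S"
    using face_of_disjoint_rel_interior by blast
  then show ?thesis using assms(4) by blast
qed

lemma zero_in_interior_inner_negative:
  fixes a :: "'a::real_inner"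
  assumes "0 \<in> interior S" "a \<noteq> 0"
  obtains y where "y \<in> S" "a \<bullet> y < 0"
proof -
  obtain e where e: "0 < e" "ball 0 e \<subseteq> S"
    using assms(1) mem_interior by blast
  define y where "y = (- (e / (2 * norm a))) *\<^sub>R a"
  have "y \<in> S" using e assms(2) by (auto simp: y_def)
  moreover have "a \<bullet> y < 0" using e assms(2) by (simp add: y_def dot_square_norm power2_eq_square)
  ultimately show thesis using that by blast
qed

lemma convex_combination_eq_lower_bound:
  fixes \<mu> f :: "'a \<Rightarrow> real"
  assumes "finite T" "\<forall>w\<in>T. 0 \<le> \<mu> w" "sum \<mu> T = 1" "\<forall>w\<in>T. c \<le> f w"
    and "(\<Sum>w\<in>T. \<mu> w * f w) = c" "w \<in> T" "0 < \<mu> w"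
  shows "f w = c"
proof -
  have "(\<Sum>w\<in>T. \<mu> w * (f w - c)) = (\<Sum>w\<in>T. \<mu> w * f w) - sum \<mu> T * c"
    by (simp add: right_diff_distrib sum_subtractf sum_distrib_right)
  then have "(\<Sum>w\<in>T. \<mu> w * (f w - c)) = 0"
    using assms(3,5) by simp
  moreover have "\<forall>w\<in>T. 0 \<le> \<mu> w * (f w - c)" using assms(2,4) by simp
  ultimately have "\<mu> w * (f w - c) = 0" using assms(1,6) by (simp add: sum_nonneg_eq_0_iff)
  then show ?thesis using assms(7) by simp
qed

lemma convex_minkowski_sum:
  assumes "\<And>i. i \<in> I \<Longrightarrow> convex (D i)"
  shows "convex (minkowski_sum D I)"
  unfolding convex_def minkowski_sum_def
proof clarsimp
  fix f g :: "nat \<Rightarrow> real^'a" and u v :: real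
  assume "\<forall>i\<in>I. f i \<in> D i" "\<forall>i\<in>I. g i \<in> D i" "0 \<le> u" "0 \<le> v" "u + v = 1"
  then show "\<exists>h. (\<forall>i\<in>I. h i \<in> D i) \<and> u *\<^sub>R sum f I + v *\<^sub>R sum g I = sum h I"
    using assms unfolding convex_def
    by (intro exI[of _ "\<lambda>i. u *\<^sub>R f i + v *\<^sub>R g i"]) (simp add: scaleR_sum_right sum.distrib)
qed

lemma minkowski_sum_replace:
  assumes "finite A" "k \<in> A" "\<forall>i\<in>A. g i \<in> D i" "x \<in> D k"
  shows "sum g A - g k + x \<in> minkowski_sum D A"
proof -
  have "sum (g(k := x)) (A - {k}) = sum g (A - {k})"
    by (rule sum.cong) auto
  then have "sum (g(k := x)) A = x + sum g (A - {k})"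
    using sum.remove[OF assms(1,2), of "g(k := x)"] by simp
  also have "\<dots> = sum g A - g k + x"
    using sum.remove[OF assms(1,2), of g] by simp
  moreover have "\<forall>i\<in>A. (g(k := x)) i \<in> D i" using assms(3,4) by simp
  ultimately show ?thesis unfolding minkowski_sum_def by (intro CollectI exI[of _ "g(k := x)"]) simp
qed

lemma subset_minkowski_sum:
  assumes "finite A" "\<forall>i\<in>A. 0 \<in> D i" "k \<in> A"
  shows "D k \<subseteq> minkowski_sum D A"
  using minkowski_sum_replace[of A k "\<lambda>_. 0" D] assms by auto

lemma minkowski_sum_halfspace_ge:
  assumes "\<forall>i\<in>A. \<forall>x\<in>D i. 0 \<le> x \<bullet> w" "y \<in> minkowski_sum D A"
  shows "0 \<le> y \<bullet> w"
  using assms unfolding minkowski_sum_def by (auto simp: inner_sum_left intro!: sum_nonneg)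

lemma centered_nef_partition_zero_in_relint_orthogonal:
  assumes "centered_nef_partition P r D" "zero_in_relint r D L"
    and "\<forall>j\<in>L. \<forall>x\<in>D j. 0 \<le> x \<bullet> w" "k \<in> L" "x \<in> D k"
  shows "x \<bullet> w = 0"
proof -
  have L: "L \<subseteq> {1..r}" "0 \<in> rel_interior (minkowski_sum D L)"
    using assms(2) unfolding zero_in_relint_def by auto
  have D: "\<forall>i\<in>L. lattice_polytope (D i) \<and> 0 \<in> D i"
    using assms(1) L(1) unfolding centered_nef_partition_def by auto
  have x: "x \<in> minkowski_sum D L"
    using subset_minkowski_sum[of L D k] D L(1) assms(4,5) finite_subset by blast
  have convex: "convex (minkowski_sum D L)"
    using D by (intro convex_minkowski_sum) (simp add: convex_lattice_polytope)
  have "\<And>y. y \<in> minkowski_sum D L \<Longrightarrow> w \<bullet> 0 \<le> w \<bullet> y"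
    using minkowski_sum_halfspace_ge[OF assms(3)] by (simp add: inner_commute[of w])
  then have "w \<bullet> x = w \<bullet> 0"
    using supporting_hyperplane_rel_interior_eq[OF convex L(2)] x by blast
  then show ?thesis by (simp add: inner_commute[of w])
qed

lemma centered_nef_partition_polar_lattice_point:
  assumes "centered_nef_partition P r D" "lattice_point w" "w \<in> polar P"
  obtains i where "\<And>j x. j \<in> {1..r} \<Longrightarrow> j \<noteq> i \<Longrightarrow> x \<in> D j \<Longrightarrow> 0 \<le> x \<bullet> w"
proof -
  have D: "\<And>i. i \<in> {1..r} \<Longrightarrow> lattice_polytope (D i) \<and> 0 \<in> D i"
    using assms(1) unfolding centered_nef_partition_def by auto
  have "\<exists>i. \<forall>j\<in>{1..r}. j \<noteq> i \<longrightarrow> (\<forall>x\<in>D j. 0 \<le> x \<bullet> w)"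
  proof (rule ccontr)
    assume neg: "\<not> ?thesis"
    then obtain j\<^sub>1 x\<^sub>1 where j\<^sub>1: "j\<^sub>1 \<in> {1..r}" "x\<^sub>1 \<in> D j\<^sub>1" "x\<^sub>1 \<bullet> w < 0"
      by (meson not_le)
    obtain j\<^sub>2 x\<^sub>2 where j\<^sub>2: "j\<^sub>2 \<in> {1..r}" "j\<^sub>2 \<noteq> j\<^sub>1" "x\<^sub>2 \<in> D j\<^sub>2" "x\<^sub>2 \<bullet> w < 0"
      using neg by (meson not_le)
    obtain s\<^sub>1 s\<^sub>2 where s: "s\<^sub>1 \<in> D j\<^sub>1" "s\<^sub>1 \<bullet> w \<le> -1" "s\<^sub>2 \<in> D j\<^sub>2" "s\<^sub>2 \<bullet> w \<le> -1"
      using lattice_polytope_negative_value_le_minus_one D j\<^sub>1 j\<^sub>2 assms(2) by metis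
    define f where "f i = (if i = j\<^sub>1 then s\<^sub>1 else 0) + (if i = j\<^sub>2 then s\<^sub>2 else 0)" for i
    have "sum f {1..r} = s\<^sub>1 + s\<^sub>2"
      using j\<^sub>1(1) j\<^sub>2(1) by (simp add: f_def sum.distrib)
    moreover have "\<forall>i\<in>{1..r}. f i \<in> D i"
      using D s(1,3) j\<^sub>2(2) by (simp add: f_def)
    then have "sum f {1..r} \<in> P"
      using assms(1) unfolding centered_nef_partition_def minkowski_sum_def by blast
    ultimately have "-1 \<le> (s\<^sub>1 + s\<^sub>2) \<bullet> w" using assms(3) unfolding polar_def by auto
    then show False using s(2,4) by (simp add: inner_add_left)
  qed
  then show thesis using that by blast
qed

lemma centered_nef_partition_polar_lattice_point_vanishes:
  assumes "centered_nef_partition P r D" "zero_in_relint r D I" "zero_in_relint r D J"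
    and "lattice_point w" "w \<in> polar P" "\<forall>j\<in>I \<inter> J. \<forall>y\<in>D j. 0 \<le> y \<bullet> w"
    and "k \<in> I \<inter> J" "x \<in> D k"
  shows "x \<bullet> w = 0"
proof -
  have IJ: "I \<subseteq> {1..r}" "J \<subseteq> {1..r}"
    using assms(2,3) unfolding zero_in_relint_def by auto
  obtain i where i: "\<And>j y. j \<in> {1..r} \<Longrightarrow> j \<noteq> i \<Longrightarrow> y \<in> D j \<Longrightarrow> 0 \<le> y \<bullet> w"
    by (rule centered_nef_partition_polar_lattice_point[OF assms(1,4,5)]) (rule that)
  \<comment> \<open>\<open>w\<close> is nonnegative on the summands in \<open>I \<inter> J\<close>, so an exceptional \<open>i\<close> there is harmless\<close>
  have nonneg: "\<forall>j\<in>L. \<forall>y\<in>D j. 0 \<le> y \<bullet> w" if "L \<subseteq> {1..r}" "i \<notin> L - I \<inter> J" for L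
  proof (intro ballI)
    fix j y assume "j \<in> L" "y \<in> D j"
    then show "0 \<le> y \<bullet> w"
      using i[of j y] assms(6) that by (cases "j = i") auto
  qed
  have "i \<notin> I - I \<inter> J \<or> i \<notin> J - I \<inter> J" by blast
  then show ?thesis
    using nonneg[OF IJ(1)] nonneg[OF IJ(2)] assms(2,3,7,8)
      centered_nef_partition_zero_in_relint_orthogonal[OF assms(1)] by blast
qed

lemma reflexive_polytope_minimizing_functional:
  fixes a p :: "real^'n"
  assumes "reflexive_polytope P" "p \<in> P" "\<forall>y\<in>P. a \<bullet> p \<le> a \<bullet> y"
  obtains W \<mu> where "finite W" "\<forall>w\<in>W. lattice_point w \<and> w \<in> polar P \<and> 0 < \<mu> w"
    and "a = (\<Sum>w\<in>W. \<mu> w *\<^sub>R w)"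
    and "\<And>q w. q \<in> P \<Longrightarrow> a \<bullet> q = a \<bullet> p \<Longrightarrow> w \<in> W \<Longrightarrow> q \<bullet> w = -1"
proof (cases "a = 0")
  case True
  then show thesis by (intro that[of "{}"]) auto
next
  case False
  obtain T where T: "finite T" "\<forall>w\<in>T. lattice_point w" "polar P = convex hull T"
    using assms(1) unfolding reflexive_polytope_def lattice_polytope_def by auto
  obtain y where "y \<in> P" "a \<bullet> y < 0"
    using zero_in_interior_inner_negative assms(1) False unfolding reflexive_polytope_def by blast
  then have neg: "a \<bullet> p < 0" using assms(3) by fastforce
  define b where "b = (- 1 / (a \<bullet> p)) *\<^sub>R a"
  have "b \<in> polar P"
    unfolding polar_def b_def using assms(3) neg by (auto simp: inner_commute field_simps)
  then obtain \<mu> where \<mu>: "\<forall>w\<in>T. 0 \<le> \<mu> w" "sum \<mu> T = 1" "(\<Sum>w\<in>T. \<mu> w *\<^sub>R w) = b"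
    unfolding T(3) convex_hull_finite[OF T(1)] by auto
  define W where "W = {w\<in>T. 0 < \<mu> w}"
  show thesis
  proof (rule that[of W "\<lambda>w. - (a \<bullet> p) * \<mu> w"])
    show "finite W" using T(1) by (simp add: W_def)
    show "\<forall>w\<in>W. lattice_point w \<and> w \<in> polar P \<and> 0 < - (a \<bullet> p) * \<mu> w"
      using T(2,3) neg hull_subset[of T convex] by (auto simp: W_def mult_neg_pos)
    have "a = (- (a \<bullet> p)) *\<^sub>R b" using neg by (simp add: b_def)
    also have "\<dots> = (\<Sum>w\<in>W. (- (a \<bullet> p) * \<mu> w) *\<^sub>R w)"
      using \<mu>(1) T(1) unfolding \<mu>(3)[symmetric] W_def
      by (auto simp: scaleR_sum_right intro!: sum.mono_neutral_right)
    finally show "a = (\<Sum>w\<in>W. (- (a \<bullet> p) * \<mu> w) *\<^sub>R w)" .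
    fix q w assume q: "q \<in> P" "a \<bullet> q = a \<bullet> p" and w: "w \<in> W"
    have "(\<Sum>v\<in>T. \<mu> v * (q \<bullet> v)) = q \<bullet> b"
      unfolding \<mu>(3)[symmetric] by (simp add: inner_sum_right)
    also have "\<dots> = -1" using q(2) neg by (simp add: b_def inner_commute)
    finally show "q \<bullet> w = -1"
      using convex_combination_eq_lower_bound[OF T(1) \<mu>(1,2), where f = "\<lambda>v. q \<bullet> v" and c = "-1"] w q(1)
        T(3) hull_subset[of T convex] unfolding W_def polar_def by auto
  qed
qed

lemma centered_nef_partition_supporting_functional_vanishes:
  fixes a :: "real^'n"
  assumes "reflexive_polytope P" "centered_nef_partition P r D"
    and "zero_in_relint r D I" "zero_in_relint r D J"
    and "\<forall>k\<in>I \<inter> J. \<forall>x\<in>D k. 0 \<le> a \<bullet> x" "k \<in> I \<inter> J" "x \<in> D k"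
  shows "a \<bullet> x = 0"
proof -
  have P: "P = minkowski_sum D {1..r}" "\<forall>i\<in>{1..r}. 0 \<in> D i"
    using assms(2) unfolding centered_nef_partition_def by auto
  have "compact P" "P \<noteq> {}"
    using assms(1) interior_subset compact_lattice_polytope unfolding reflexive_polytope_def by blast+
  moreover have "continuous_on P (\<lambda>y. a \<bullet> y)" by (intro continuous_intros)
  ultimately obtain p where p: "p \<in> P" "\<forall>y\<in>P. a \<bullet> p \<le> a \<bullet> y"
    using continuous_attains_inf by blast
  obtain g where g: "\<forall>i\<in>{1..r}. g i \<in> D i" "p = sum g {1..r}"
    using p(1) unfolding P(1) minkowski_sum_def by auto
  obtain W \<mu> where W: "\<forall>w\<in>W. lattice_point w \<and> w \<in> polar P \<and> 0 < \<mu> w"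
    and a: "a = (\<Sum>w\<in>W. \<mu> w *\<^sub>R w)"
    and tight: "\<And>q w. q \<in> P \<Longrightarrow> a \<bullet> q = a \<bullet> p \<Longrightarrow> w \<in> W \<Longrightarrow> q \<bullet> w = -1"
    by (rule reflexive_polytope_minimizing_functional[OF assms(1) p]) (rule that)
  have nonneg_on_Int: "0 \<le> y \<bullet> w" if "w \<in> W" "j \<in> I \<inter> J" "y \<in> D j" for w j y
  proof -
    have j: "j \<in> {1..r}" using that(2) assms(3) unfolding zero_in_relint_def by auto
    have in_P: "p - g j + z \<in> P" if "z \<in> D j" for z
      using minkowski_sum_replace[OF _ j g(1) that] g(2) unfolding P(1) by simp
    have q: "p - g j \<in> P" using in_P[of 0] P(2) j by simp
    \<comment> \<open>dropping the summand \<open>g j\<close> keeps \<open>p\<close> on the face where \<open>a\<close> is minimal\<close>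
    have "a \<bullet> p \<le> a \<bullet> (p - g j)" using p(2) q by blast
    moreover have "0 \<le> a \<bullet> g j" using assms(5) that(2) g(1) j by blast
    ultimately have "a \<bullet> (p - g j) = a \<bullet> p" by (simp add: inner_diff_right)
    then have "(p - g j) \<bullet> w = -1" using tight q that(1) by blast
    moreover have "-1 \<le> (p - g j + y) \<bullet> w"
      using in_P[OF that(3)] W(1) that(1) unfolding polar_def by blast
    ultimately have "-1 \<le> -1 + y \<bullet> w" by (simp add: inner_add_left)
    then show ?thesis by simp
  qed
  have orthogonal: "x \<bullet> w = 0" if "w \<in> W" for w
    using centered_nef_partition_polar_lattice_point_vanishes[OF assms(2-4)] W nonneg_on_Int that
      assms(6,7) by blast
  have "a \<bullet> x = (\<Sum>w\<in>W. \<mu> w * (w \<bullet> x))"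
    unfolding a by (simp add: inner_sum_left)
  then show ?thesis using orthogonal by (simp add: inner_commute)
qed

lemma centered_nef_partition_zero_in_relint_Int:
  assumes "reflexive_polytope P" "centered_nef_partition P r D"
    and "zero_in_relint r D I" "zero_in_relint r D J" "I \<inter> J \<noteq> {}"
  shows "zero_in_relint r D (I \<inter> J)"
proof -
  let ?S = "minkowski_sum D (I \<inter> J)"
  have K: "I \<inter> J \<subseteq> {1..r}" "finite (I \<inter> J)"
    using assms(3) finite_subset unfolding zero_in_relint_def by auto
  have D: "\<forall>i\<in>I \<inter> J. lattice_polytope (D i) \<and> 0 \<in> D i"
    using assms(2) K(1) unfolding centered_nef_partition_def by auto
  have sub: "D k \<subseteq> ?S" if "k \<in> I \<inter> J" for k
    using subset_minkowski_sum[OF K(2)] D that by blast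
  have zero: "0 \<in> ?S" using sub D assms(5) by blast
  have convex: "convex ?S"
    using D by (intro convex_minkowski_sum) (simp add: convex_lattice_polytope)
  have "0 \<in> rel_interior ?S"
  proof (rule ccontr)
    assume "0 \<notin> rel_interior ?S"
    then obtain a where a: "\<And>y. y \<in> ?S \<Longrightarrow> a \<bullet> 0 \<le> a \<bullet> y"
      and a_pos: "\<And>y. y \<in> rel_interior ?S \<Longrightarrow> a \<bullet> 0 < a \<bullet> y"
      by (rule supporting_hyperplane_rel_boundary[OF convex zero]) (rule that)
    have "\<forall>k\<in>I \<inter> J. \<forall>x\<in>D k. 0 \<le> a \<bullet> x"
      using a sub by auto
    then have "\<forall>k\<in>I \<inter> J. \<forall>x\<in>D k. a \<bullet> x = 0"
      using centered_nef_partition_supporting_functional_vanishes[OF assms(1-4)] by blast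
    then have vanish: "\<forall>y\<in>?S. a \<bullet> y = 0"
      unfolding minkowski_sum_def by (auto simp: inner_sum_right)
    obtain y where y: "y \<in> rel_interior ?S"
      using rel_interior_eq_empty[OF convex] zero by blast
    then have "y \<in> ?S" using rel_interior_subset by blast
    then show False using a_pos[OF y] vanish by simp
  qed
  then show ?thesis using assms(5) K(1) unfolding zero_in_relint_def by blast
qed

theorem proposition6p12:
  fixes P :: "(real^'n) set" and r :: nat and D :: "nat \<Rightarrow> (real^'n) set"
    and I J :: "nat set"
  assumes "reflexive_polytope P"
    and "proper_nef_partition P r D"
    and "irreducible_subset r D I"
    and "irreducible_subset r D J"
    and "I \<noteq> J"
  shows "I \<inter> J = {}"
proof (rule ccontr)
  assume "I \<inter> J \<noteq> {}"
  have I: "zero_in_relint r D I" "\<forall>K. K \<subset> I \<longrightarrow> \<not> zero_in_relint r D K"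
    using assms(3) unfolding irreducible_subset_def by auto
  have J: "zero_in_relint r D J" "\<forall>K. K \<subset> J \<longrightarrow> \<not> zero_in_relint r D K"
    using assms(4) unfolding irreducible_subset_def by auto
  have "centered_nef_partition P r D"
    using assms(2) unfolding proper_nef_partition_def by blast
  then have "zero_in_relint r D (I \<inter> J)"
    using centered_nef_partition_zero_in_relint_Int assms(1) I(1) J(1) \<open>I \<inter> J \<noteq> {}\<close> by blast
  then have "\<not> I \<inter> J \<subset> I" "\<not> I \<inter> J \<subset> J"
    using I(2) J(2) by auto
  then show False using assms(5) by blast
qed

end
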